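(* Let $\mathfrak S$ be a commutative semiring. The set of all proper ideals, the set of all prime ideals, and the set of all strongly irreducible ideals of $\mathfrak S$, each endowed with the ideal topology, are sober spaces.
   Context: A semiring $(\mathfrak S,+,0,\cdot,1)$ has $(\mathfrak S,+,0)$ a commutative monoid, $(\mathfrak S,\cdot,1)$ a monoid, $0r=r0=0$, and two-sided distributivity; all semirings are commutative. An ideal is a nonempty proper subset closed under addition and under multiplication by elements of $\mathfrak S$. Prime: $ab\in\mathfrak p\Rightarrow a\in\mathfrak p$ or $b\in\mathfrak p$. Strongly irreducible: for ideals $\mathfrak a,\mathfrak b$, $\mathfrak a\cap\mathfrak b\subseteq\mathfrak s$ implies $\mathfrak a\subseteq\mathfrak s$ or $\mathfrak b\subseteq\mathfrak s$. For a set $\sigma_{\mathfrak S}$ of ideals and an ideal $\mathfrak a$, $\mathfrak a^{\uparrow}=\{\mathfrak x\in\sigma_{\mathfrak S}\mid\mathfrak a\subseteq\mathfrak x\}$; the ideal topology has these sets as a subbasis of closed sets. Sober: every non-empty irreducible closed subset is the closure of a unique point. *)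

theory Defs
  imports "HOL-Analysis.Analysis"
begin

text \<open>Semirings: commutative semiring with 0 and 1 (0 = 1 allowed):
  sort {comm_semiring_0, comm_monoid_mult}.\<close>

definition is_ideal :: "'a::{comm_semiring_0,comm_monoid_mult} set \<Rightarrow> bool" where
  "is_ideal I \<longleftrightarrow> I \<noteq> {} \<and> I \<noteq> UNIV \<and>
     (\<forall>x\<in>I. \<forall>y\<in>I. x + y \<in> I) \<and> (\<forall>r x. x \<in> I \<longrightarrow> r * x \<in> I)"

definition is_prime_ideal :: "'a::{comm_semiring_0,comm_monoid_mult} set \<Rightarrow> bool" where
  "is_prime_ideal P \<longleftrightarrow> is_ideal P \<and> (\<forall>a b. a * b \<in> P \<longrightarrow> a \<in> P \<or> b \<in> P)"

definition is_strongly_irreducible_ideal :: "'a::{comm_semiring_0,comm_monoid_mult} set \<Rightarrow> bool" where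
  "is_strongly_irreducible_ideal S \<longleftrightarrow> is_ideal S \<and>
     (\<forall>A B. is_ideal A \<longrightarrow> is_ideal B \<longrightarrow> A \<inter> B \<subseteq> S \<longrightarrow> A \<subseteq> S \<or> B \<subseteq> S)"

definition up_set :: "'a set set \<Rightarrow> 'a set \<Rightarrow> 'a set set" where
  "up_set \<sigma> A = {X \<in> \<sigma>. A \<subseteq> X}"

text \<open>Ideal topology on sigma: the sets up_set sigma a (a an ideal) form a subbasis of
  closed sets, i.e. their complements in sigma form a subbasis of open sets.\<close>
definition ideal_topology :: "'a::{comm_semiring_0,comm_monoid_mult} set set \<Rightarrow> 'a set topology" where
  "ideal_topology \<sigma> =
     subtopology (topology_generated_by {\<sigma> - up_set \<sigma> A | A. is_ideal A}) \<sigma>"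

definition irreducible_in :: "'b topology \<Rightarrow> 'b set \<Rightarrow> bool" where
  "irreducible_in X C \<longleftrightarrow> C \<noteq> {} \<and> C \<subseteq> topspace X \<and>
     (\<forall>A B. closedin X A \<longrightarrow> closedin X B \<longrightarrow> C \<subseteq> A \<union> B \<longrightarrow> C \<subseteq> A \<or> C \<subseteq> B)"

definition sober_space :: "'b topology \<Rightarrow> bool" where
  "sober_space X \<longleftrightarrow>
     (\<forall>C. closedin X C \<and> irreducible_in X C \<longrightarrow>
        (\<exists>!x. x \<in> topspace X \<and> C = X closure_of {x}))"

end

theory Submission
  imports Defs
begin

text \<open>In the ideal topology on a family \<sigma> of ideals the closure of a point x consists of the
  points containing x, and an irreducible closed set C is the closure of \<Inter>C: a point Y \<supseteq> \<Inter>C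
  outside C would have a basic neighbourhood \<Inter>i. \<sigma> - up_set \<sigma> (A i) missing C, and irreducibility
  puts C inside a single up_set \<sigma> (A i), whence A i \<subseteq> \<Inter>C \<subseteq> Y, a contradiction. So sobriety reduces to
  \<Inter>C \<in> \<sigma> for such C. For proper ideals this is clear, for strongly irreducible ideals it is
  irreducibility of C read off directly, and for prime ideals with ab \<in> \<Inter>C one applies
  irreducibility to the ideals \<Inter>{P \<in> C. a \<in> P} and \<Inter>{P \<in> C. b \<in> P}.\<close>

lemma openin_topology_generated_by_nbhd:
  assumes "openin (topology_generated_by SB) W" "y \<in> W"
  shows "\<exists>F. finite F \<and> F \<noteq> {} \<and> F \<subseteq> SB \<and> y \<in> \<Inter>F \<and> \<Inter>F \<subseteq> W"
proof -
  have "generate_topology_on SB W"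
    using assms(1) by (rule openin_topology_generated_by)
  then have "(arbitrary union_of finite' intersection_of (\<lambda>U. U \<in> SB)) W"
    unfolding generate_topology_on_eq .
  then obtain U where U: "(finite' intersection_of (\<lambda>U. U \<in> SB)) U" "y \<in> U" "U \<subseteq> W"
    using assms(2) unfolding arbitrary_union_of_alt by blast
  then obtain F where "finite F" "F \<noteq> {}" "F \<subseteq> SB" "\<Inter>F = U"
    unfolding intersection_of_def by blast
  with U show ?thesis
    by blast
qed

lemma closure_of_singleton_topology_generated_by:
  "topology_generated_by SB closure_of {x} = {y \<in> \<Union>SB. \<forall>U\<in>SB. y \<in> U \<longrightarrow> x \<in> U}"
proof (intro equalityI subsetI)
  fix y assume y: "y \<in> topology_generated_by SB closure_of {x}"
  have "y \<in> topspace (topology_generated_by SB)"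
    using y in_closure_of by fast
  moreover have "x \<in> U" if "U \<in> SB" "y \<in> U" for U
  proof -
    have "openin (topology_generated_by SB) U"
      using that(1) by (rule topology_generated_by_Basis)
    with y that(2) show ?thesis
      unfolding in_closure_of by blast
  qed
  ultimately show "y \<in> {y \<in> \<Union>SB. \<forall>U\<in>SB. y \<in> U \<longrightarrow> x \<in> U}"
    by simp
next
  fix y assume y: "y \<in> {y \<in> \<Union>SB. \<forall>U\<in>SB. y \<in> U \<longrightarrow> x \<in> U}"
  have "x \<in> W" if W: "openin (topology_generated_by SB) W" "y \<in> W" for W
  proof -
    obtain F where F: "F \<subseteq> SB" "y \<in> \<Inter>F" "\<Inter>F \<subseteq> W"
      using openin_topology_generated_by_nbhd[OF W] by blast
    have "x \<in> \<Inter>F"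
      using y F(1,2) by auto
    with F(3) show "x \<in> W"
      by blast
  qed
  with y show "y \<in> topology_generated_by SB closure_of {x}"
    unfolding in_closure_of by auto
qed

lemma irreducible_in_subset_Union:
  assumes "irreducible_in X C" "finite F" "\<And>K. K \<in> F \<Longrightarrow> closedin X K" "C \<subseteq> \<Union>F"
  shows "\<exists>K\<in>F. C \<subseteq> K"
  using assms(2-4)
proof (induction F rule: finite_induct)
  case empty
  then show ?case using assms(1) by (simp add: irreducible_in_def)
next
  case (insert K F)
  have "closedin X K" "closedin X (\<Union>F)"
    using insert.prems(1) insert.hyps(1) by (auto intro: closedin_Union)
  moreover have "C \<subseteq> K \<union> \<Union>F"
    using insert.prems(2) by simp
  ultimately have "C \<subseteq> K \<or> C \<subseteq> \<Union>F"
    using assms(1) unfolding irreducible_in_def by blast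
  then show ?case
    using insert.IH insert.prems(1) by blast
qed

lemma irreducible_closedin_topology_generated_by_memI:
  assumes closed: "closedin (topology_generated_by SB) C"
    and irred: "irreducible_in (topology_generated_by SB) C"
    and y: "y \<in> \<Union>SB" "\<And>U. U \<in> SB \<Longrightarrow> C \<inter> U = {} \<Longrightarrow> y \<notin> U"
  shows "y \<in> C"
proof (rule ccontr)
  assume "y \<notin> C"
  with y(1) have "y \<in> \<Union>SB - C"
    by blast
  moreover have "openin (topology_generated_by SB) (\<Union>SB - C)"
    using closed by (simp add: closedin_def)
  ultimately obtain F where F: "finite F" "F \<subseteq> SB" "y \<in> \<Inter>F" "\<Inter>F \<subseteq> \<Union>SB - C"
    by (meson openin_topology_generated_by_nbhd)
  have "C \<subseteq> \<Union>((\<lambda>U. \<Union>SB - U) ` F)"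
    using F(4) closedin_subset[OF closed] by auto
  moreover have "closedin (topology_generated_by SB) (\<Union>SB - U)" if "U \<in> F" for U
  proof -
    have "U \<in> SB" using that F(2) by blast
    then show ?thesis
      by (simp add: closedin_def Diff_Diff_Int Int_absorb1 Sup_upper topology_generated_by_Basis)
  qed
  ultimately obtain U where "U \<in> F" "C \<subseteq> \<Union>SB - U"
    using irreducible_in_subset_Union[OF irred] F(1) by (metis (no_types, lifting) finite_imageI imageE)
  then show False
    using F(2,3) y(2) by blast
qed

lemma ideal_topology_eq:
  "ideal_topology \<sigma> = topology_generated_by {\<sigma> - up_set \<sigma> A | A. is_ideal A}"
  unfolding ideal_topology_def by (rule subtopology_superset) auto

text \<open>A member of \<sigma> containing every ideal lies in no subbasic open set, so it is not a point
  of the space.\<close>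

lemma topspace_ideal_topology:
  "topspace (ideal_topology \<sigma>) = {X \<in> \<sigma>. \<exists>A. is_ideal A \<and> \<not> A \<subseteq> X}"
  by (auto simp: ideal_topology_eq up_set_def)

lemma closedin_ideal_topology_up_set:
  assumes "is_ideal A"
  shows "closedin (ideal_topology \<sigma>) (topspace (ideal_topology \<sigma>) \<inter> up_set \<sigma> A)"
proof -
  have "topspace (ideal_topology \<sigma>) - topspace (ideal_topology \<sigma>) \<inter> up_set \<sigma> A
      = \<sigma> - up_set \<sigma> A"
    using assms by (auto simp: topspace_ideal_topology up_set_def)
  then show ?thesis
    using assms unfolding closedin_def ideal_topology_eq
    by (auto intro: topology_generated_by_Basis)
qed

lemma closure_of_singleton_ideal_topology:
  assumes "x \<in> topspace (ideal_topology \<sigma>)" "is_ideal x"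
  shows "ideal_topology \<sigma> closure_of {x} = topspace (ideal_topology \<sigma>) \<inter> up_set \<sigma> x"
  using assms unfolding ideal_topology_eq
  by (subst closure_of_singleton_topology_generated_by) (auto simp: up_set_def)

lemma irreducible_closedin_ideal_topology_eq:
  assumes "closedin (ideal_topology \<sigma>) C" "irreducible_in (ideal_topology \<sigma>) C"
  shows "C = topspace (ideal_topology \<sigma>) \<inter> up_set \<sigma> (\<Inter>C)"
proof (intro equalityI subsetI)
  have "C \<subseteq> topspace (ideal_topology \<sigma>)"
    using assms(1) closedin_subset by blast
  then show "Y \<in> topspace (ideal_topology \<sigma>) \<inter> up_set \<sigma> (\<Inter>C)" if "Y \<in> C" for Y
    using that by (auto simp: topspace_ideal_topology up_set_def)
next
  fix Y assume Y: "Y \<in> topspace (ideal_topology \<sigma>) \<inter> up_set \<sigma> (\<Inter>C)"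
  have "C \<subseteq> \<sigma>"
    using assms(1) closedin_subset by (fastforce simp: topspace_ideal_topology)
  then have "A \<subseteq> \<Inter>C" if "C \<inter> (\<sigma> - up_set \<sigma> A) = {}" for A
    using that by (auto simp: up_set_def)
  moreover have "\<Inter>C \<subseteq> Y"
    using Y by (simp add: up_set_def)
  ultimately have "Y \<notin> \<sigma> - up_set \<sigma> A" if "C \<inter> (\<sigma> - up_set \<sigma> A) = {}" for A
    using that by (simp add: up_set_def) (metis order_trans)
  then have avoid: "Y \<notin> U" if "U \<in> {\<sigma> - up_set \<sigma> A | A. is_ideal A}" "C \<inter> U = {}" for U
    using that by blast
  have "Y \<in> \<Union>{\<sigma> - up_set \<sigma> A | A. is_ideal A}"
    using Y by (simp add: ideal_topology_eq)
  from irreducible_closedin_topology_generated_by_memI[OF assms[unfolded ideal_topology_eq] this avoid]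
  show "Y \<in> C" .
qed

definition irreducible_ideal_family :: "'a::{comm_semiring_0,comm_monoid_mult} set set \<Rightarrow> bool" where
  "irreducible_ideal_family C \<longleftrightarrow>
     (\<forall>A B. is_ideal A \<longrightarrow> is_ideal B \<longrightarrow> (\<forall>P\<in>C. A \<subseteq> P \<or> B \<subseteq> P) \<longrightarrow> A \<subseteq> \<Inter>C \<or> B \<subseteq> \<Inter>C)"

lemma irreducible_in_ideal_topology_imp_irreducible_ideal_family:
  assumes "irreducible_in (ideal_topology \<sigma>) C"
  shows "irreducible_ideal_family C"
  unfolding irreducible_ideal_family_def
proof (intro allI impI)
  fix A B :: "'a set"
  assume A: "is_ideal A" and B: "is_ideal B" and cover: "\<forall>P\<in>C. A \<subseteq> P \<or> B \<subseteq> P"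
  let ?T = "topspace (ideal_topology \<sigma>)"
  have "C \<subseteq> ?T" "C \<subseteq> \<sigma>"
    using assms by (auto simp: irreducible_in_def topspace_ideal_topology)
  with cover have "C \<subseteq> (?T \<inter> up_set \<sigma> A) \<union> (?T \<inter> up_set \<sigma> B)"
    by (auto simp: up_set_def)
  then have "C \<subseteq> ?T \<inter> up_set \<sigma> A \<or> C \<subseteq> ?T \<inter> up_set \<sigma> B"
    using assms closedin_ideal_topology_up_set[OF A] closedin_ideal_topology_up_set[OF B]
    unfolding irreducible_in_def by blast
  then show "A \<subseteq> \<Inter>C \<or> B \<subseteq> \<Inter>C"
    by (auto simp: up_set_def)
qed

lemma t0_space_ideal_topology:
  assumes ideals: "\<And>X. X \<in> \<sigma> \<Longrightarrow> is_ideal X"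
  shows "t0_space (ideal_topology \<sigma>)"
  unfolding t0_space_closure_of_sing
proof (intro ballI impI)
  let ?T = "topspace (ideal_topology \<sigma>)"
  fix x y assume x: "x \<in> ?T" and y: "y \<in> ?T"
    and eq: "ideal_topology \<sigma> closure_of {x} = ideal_topology \<sigma> closure_of {y}"
  have "x \<in> \<sigma>" "y \<in> \<sigma>"
    using x y by (simp_all add: topspace_ideal_topology)
  then have "x \<in> ?T \<inter> up_set \<sigma> x" "y \<in> ?T \<inter> up_set \<sigma> y"
    using x y by (simp_all add: up_set_def)
  moreover have "?T \<inter> up_set \<sigma> x = ?T \<inter> up_set \<sigma> y"
    using eq x y \<open>x \<in> \<sigma>\<close> \<open>y \<in> \<sigma>\<close> by (simp add: closure_of_singleton_ideal_topology ideals)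
  ultimately have "x \<in> up_set \<sigma> y" "y \<in> up_set \<sigma> x"
    by blast+
  then show "x = y"
    by (auto simp: up_set_def)
qed

lemma sober_space_ideal_topology:
  fixes \<sigma> :: "'a::{comm_semiring_0,comm_monoid_mult} set set"
  assumes ideals: "\<And>X. X \<in> \<sigma> \<Longrightarrow> is_ideal X"
    and Inter_mem: "\<And>C. C \<noteq> {} \<Longrightarrow> C \<subseteq> \<sigma> \<Longrightarrow> irreducible_ideal_family C \<Longrightarrow> \<Inter>C \<in> \<sigma>"
  shows "sober_space (ideal_topology \<sigma>)"
  unfolding sober_space_def
proof (intro allI impI)
  let ?T = "topspace (ideal_topology \<sigma>)"
  fix C assume "closedin (ideal_topology \<sigma>) C \<and> irreducible_in (ideal_topology \<sigma>) C"
  then have closed: "closedin (ideal_topology \<sigma>) C" and irred: "irreducible_in (ideal_topology \<sigma>) C"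
    by blast+
  have "C \<noteq> {}" "C \<subseteq> ?T"
    using irred by (auto simp: irreducible_in_def)
  then have "C \<subseteq> \<sigma>"
    by (auto simp: topspace_ideal_topology)
  have "\<Inter>C \<in> \<sigma>"
    using \<open>C \<noteq> {}\<close> \<open>C \<subseteq> \<sigma>\<close> irred
    by (intro Inter_mem irreducible_in_ideal_topology_imp_irreducible_ideal_family)
  moreover obtain P where "P \<in> C"
    using \<open>C \<noteq> {}\<close> by blast
  ultimately have "\<Inter>C \<in> ?T"
    using \<open>C \<subseteq> ?T\<close> by (force simp: topspace_ideal_topology)
  have "C = ?T \<inter> up_set \<sigma> (\<Inter>C)"
    using closed irred by (rule irreducible_closedin_ideal_topology_eq)
  also have "\<dots> = ideal_topology \<sigma> closure_of {\<Inter>C}"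
    by (rule closure_of_singleton_ideal_topology[OF \<open>\<Inter>C \<in> ?T\<close> ideals, symmetric]) fact
  finally have C_eq: "C = ideal_topology \<sigma> closure_of {\<Inter>C}" .
  show "\<exists>!x. x \<in> ?T \<and> C = ideal_topology \<sigma> closure_of {x}"
  proof
    show "\<Inter>C \<in> ?T \<and> C = ideal_topology \<sigma> closure_of {\<Inter>C}"
      using \<open>\<Inter>C \<in> ?T\<close> C_eq by blast
    show "y = \<Inter>C" if y: "y \<in> ?T \<and> C = ideal_topology \<sigma> closure_of {y}" for y
    proof -
      have "ideal_topology \<sigma> closure_of {y} = ideal_topology \<sigma> closure_of {\<Inter>C}"
        using y C_eq by simp
      with y \<open>\<Inter>C \<in> ?T\<close> t0_space_ideal_topology[OF ideals] show ?thesis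
        unfolding t0_space_closure_of_sing by blast
    qed
  qed
qed

lemma is_ideal_zero:
  assumes "is_ideal I"
  shows "0 \<in> I"
proof -
  obtain p where "p \<in> I"
    using assms by (auto simp: is_ideal_def)
  then have "0 * p \<in> I"
    using assms unfolding is_ideal_def by blast
  then show ?thesis
    by simp
qed

lemma is_ideal_Inter:
  assumes "C \<noteq> {}" and ideals: "\<And>P. P \<in> C \<Longrightarrow> is_ideal P"
  shows "is_ideal (\<Inter>C)"
  unfolding is_ideal_def
proof (intro conjI ballI allI impI)
  have "0 \<in> \<Inter>C"
    using ideals is_ideal_zero by blast
  then show "\<Inter>C \<noteq> {}"
    by blast
  obtain P where "P \<in> C"
    using assms(1) by blast
  moreover have "P \<noteq> UNIV" if "P \<in> C" for P
    using ideals[OF that] by (simp add: is_ideal_def)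
  ultimately show "\<Inter>C \<noteq> UNIV"
    by blast
  show "x + y \<in> \<Inter>C" if "x \<in> \<Inter>C" "y \<in> \<Inter>C" for x y
    using that ideals unfolding is_ideal_def by blast
  show "r * x \<in> \<Inter>C" if "x \<in> \<Inter>C" for r x
    using that ideals unfolding is_ideal_def by blast
qed

lemma is_strongly_irreducible_ideal_Inter:
  assumes "C \<noteq> {}" "\<And>P. P \<in> C \<Longrightarrow> is_strongly_irreducible_ideal P"
    and "irreducible_ideal_family C"
  shows "is_strongly_irreducible_ideal (\<Inter>C)"
  unfolding is_strongly_irreducible_ideal_def
proof (intro conjI allI impI)
  show "is_ideal (\<Inter>C)"
    using assms(1,2) is_ideal_Inter by (auto simp: is_strongly_irreducible_ideal_def)
  fix A B assume A: "is_ideal A" and B: "is_ideal B" and "A \<inter> B \<subseteq> \<Inter>C"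
  then have "A \<subseteq> P \<or> B \<subseteq> P" if "P \<in> C" for P
    using that assms(2) unfolding is_strongly_irreducible_ideal_def by blast
  then show "A \<subseteq> \<Inter>C \<or> B \<subseteq> \<Inter>C"
    using assms(3) A B unfolding irreducible_ideal_family_def by blast
qed

lemma is_prime_ideal_Inter:
  assumes nonempty: "C \<noteq> {}" and prime: "\<And>P. P \<in> C \<Longrightarrow> is_prime_ideal P"
    and irred: "irreducible_ideal_family C"
  shows "is_prime_ideal (\<Inter>C)"
  unfolding is_prime_ideal_def
proof (intro conjI allI impI)
  have ideals: "\<And>P. P \<in> C \<Longrightarrow> is_ideal P"
    using prime by (simp add: is_prime_ideal_def)
  then show "is_ideal (\<Inter>C)"
    using nonempty is_ideal_Inter by blast
  fix a b assume "a * b \<in> \<Inter>C"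
  then have a_or_b: "a \<in> P \<or> b \<in> P" if "P \<in> C" for P
    using that prime unfolding is_prime_ideal_def by blast
  define Ca where "Ca = {P \<in> C. a \<in> P}"
  define Cb where "Cb = {P \<in> C. b \<in> P}"
  consider "Ca = {}" | "Cb = {}" | "Ca \<noteq> {}" "Cb \<noteq> {}" by blast
  then show "a \<in> \<Inter>C \<or> b \<in> \<Inter>C"
  proof cases
    case 1
    then show ?thesis using a_or_b by (auto simp: Ca_def)
  next
    case 2
    then show ?thesis using a_or_b by (auto simp: Cb_def)
  next
    case 3
    then have "is_ideal (\<Inter>Ca)" "is_ideal (\<Inter>Cb)"
      by (auto intro!: is_ideal_Inter simp: Ca_def Cb_def ideals)
    moreover have "\<Inter>Ca \<subseteq> P \<or> \<Inter>Cb \<subseteq> P" if "P \<in> C" for P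
      using that a_or_b by (auto simp: Ca_def Cb_def)
    ultimately have "\<Inter>Ca \<subseteq> \<Inter>C \<or> \<Inter>Cb \<subseteq> \<Inter>C"
      using irred unfolding irreducible_ideal_family_def by blast
    moreover have "a \<in> \<Inter>Ca" "b \<in> \<Inter>Cb"
      by (auto simp: Ca_def Cb_def)
    ultimately show ?thesis by blast
  qed
qed

theorem corollary3p10:
  fixes S :: "'a::{comm_semiring_0,comm_monoid_mult} itself"
  shows "sober_space (ideal_topology {I :: 'a set. is_ideal I})
       \<and> sober_space (ideal_topology {I :: 'a set. is_prime_ideal I})
       \<and> sober_space (ideal_topology {I :: 'a set. is_strongly_irreducible_ideal I})"
proof (intro conjI)
  show "sober_space (ideal_topology {I :: 'a set. is_ideal I})"
    by (rule sober_space_ideal_topology) (auto intro: is_ideal_Inter)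
  show "sober_space (ideal_topology {I :: 'a set. is_prime_ideal I})"
    by (rule sober_space_ideal_topology)
      (simp add: is_prime_ideal_def, blast intro: is_prime_ideal_Inter)
  show "sober_space (ideal_topology {I :: 'a set. is_strongly_irreducible_ideal I})"
    by (rule sober_space_ideal_topology)
      (simp add: is_strongly_irreducible_ideal_def, blast intro: is_strongly_irreducible_ideal_Inter)
qed

end
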